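(* Let $f:\mathbb{R}^n\to\mathbb{R}$ be differentiable with $L$-Lipschitz gradient $\nabla f$, i.e. $\|\nabla f(x)-\nabla f(y)\|_2\le L\|x-y\|_2$ for all $x,y$. Suppose the estimators $G^t$ are independent versions of an unbiased estimator $G$ of $\nabla f$, and let $x^t$ be the iterates of stochastic Markov gradient descent (SMGD) with lattice resolution $\alpha>0$ and normalizer $\eta>0$. Let $\mathcal{E}^t$ denote the event that $\|G^t(x^t)\|_\infty\le\eta$. Then $$\mathbb{E}\left[f(x^{t+1})\,\middle|\,x^t,\mathcal{E}^t\right]\le f(x^t)+\frac{L\alpha^2}{2\eta}\,\mathbb{E}\left[\|G(x^t)\|_1\,\middle|\,x^t,\mathcal{E}^t\right]-\frac{\alpha}{\eta}\|\nabla f(x^t)\|_2^2 .$$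
   Context: SMGD: Let $f:\mathbb{R}^n\to\mathbb{R}$ be differentiable, $\alpha>0$, $\eta>0$, and $x^0\in\alpha\mathbb{Z}^n$. At step $t$ a random vector $G^t(x^t)\in\mathbb{R}^n$ (an estimate of $\nabla f(x^t)$) is drawn; then for each coordinate $i\in\{1,\dots,n\}$, conditionally on $G^t$ and $x^t$, $\Delta^t_i\in\{0,1\}$ is a Bernoulli random variable with $\mathbb{P}[\Delta^t_i=1\mid G^t,x^t]=\min(|G^t(x^t)_i|/\eta,1)$, and one sets $x^{t+1}_i=x^t_i-\alpha\,\mathrm{sgn}(G^t(x^t)_i)\,\Delta^t_i$. A random function $G:\mathbb{R}^n\to\mathbb{R}^n$ is an unbiased estimator of $\nabla f$ if $\mathbb{E}[G(x)]=\nabla f(x)$ for every $x$. Standing assumptions: $\{G^t\}$ are independent identically distributed copies of $G$; each $G^t$ is independent of $x^t$, so $\mathbb{E}[G^t(x^t)\mid x^t]=\nabla f(x^t)$; and moreover $\mathbb{E}[G^t(x^t)\mid x^t,\mathcal{E}^t]=\nabla f(x^t)$, where $\mathcal{E}^t$ is the event $\|G^t(x^t)\|_\infty\le\eta$. Subscript $i$ denotes the $i$-th coordinate. *)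

theory Defs
  imports "HOL-Probability.Probability"
begin

text \<open>Elementary conditional expectation of a random variable h given an event A
  (meaningful when A is an event of positive probability):
  E[h | A] = (1 / P(A)) * integral of h over A.\<close>
definition cond_exp_event :: "'a measure \<Rightarrow> 'a set \<Rightarrow> ('a \<Rightarrow> 'b::{banach, second_countable_topology}) \<Rightarrow> 'b" where
  "cond_exp_event M A h = (1 / measure M A) *\<^sub>R set_lebesgue_integral M A h"

definition norm1 :: "real ^ 'n \<Rightarrow> real" where
  "norm1 v = (\<Sum>i\<in>UNIV. \<bar>v $ i\<bar>)"

end

theory Submission
  imports Defs
begin

text \<open>
  An SMGD step moves coordinate \<open>i\<close> by \<open>h\<^sub>i = - \<alpha> sgn(G\<^sub>i) D\<^sub>i\<close> with \<open>D\<^sub>i \<in> {0, 1}\<close>, so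
  \<open>\<parallel>h\<parallel>\<^sup>2 \<le> \<alpha>\<^sup>2 \<Sum>\<^sub>i D\<^sub>i\<close> and the descent lemma for the \<open>L\<close>-smooth \<open>f\<close> gives
  \<open>f (x + h) \<le> f x - \<alpha> \<Sum>\<^sub>i \<partial>\<^sub>if(x) sgn(G\<^sub>i) D\<^sub>i + L \<alpha>\<^sup>2/2 \<Sum>\<^sub>i D\<^sub>i\<close>.
  On the event \<open>\<parallel>G\<parallel>\<^sub>\<infinity> \<le> \<eta>\<close> the cap in the Bernoulli parameter \<open>min (|G\<^sub>i|/\<eta>) 1\<close> is
  inactive, so integrating the thinning identity over events determined by \<open>(X, G)\<close> gives
  \<open>E[D\<^sub>i] = E|G\<^sub>i|/\<eta>\<close> and, splitting by the sign of \<open>G\<^sub>i\<close>,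
  \<open>E[sgn(G\<^sub>i) D\<^sub>i] = E[G\<^sub>i]/\<eta> = \<partial>\<^sub>if(x)/\<eta>\<close>. Taking conditional expectations of the
  pointwise bound yields the claim.
\<close>

lemma descent_lemma:
  fixes f :: "'a::real_inner \<Rightarrow> real"
  assumes grad: "\<And>x. (f has_derivative (\<lambda>h. grad x \<bullet> h)) (at x)"
    and lip: "\<And>x y. norm (grad x - grad y) \<le> L * norm (x - y)"
  shows "f (x + h) \<le> f x + grad x \<bullet> h + L / 2 * (norm h)\<^sup>2"
proof -
  define \<phi> where "\<phi> s = f (x + s *\<^sub>R h) - s * (grad x \<bullet> h) - L / 2 * s\<^sup>2 * (norm h)\<^sup>2" for s :: real
  have \<phi>_deriv: "(\<phi> has_real_derivative (grad (x + s *\<^sub>R h) - grad x) \<bullet> h - L * s * (norm h)\<^sup>2) (at s)" for s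
  proof -
    have "((\<lambda>s. x + s *\<^sub>R h) has_derivative (\<lambda>r. r *\<^sub>R h)) (at s)"
      by (auto intro!: derivative_eq_intros)
    from has_derivative_compose[OF this grad]
    have "((\<lambda>s. f (x + s *\<^sub>R h)) has_real_derivative grad (x + s *\<^sub>R h) \<bullet> h) (at s)"
      by (simp add: has_field_derivative_def mult.commute[of _ "grad (x + s *\<^sub>R h) \<bullet> h"])
    then show ?thesis
      unfolding \<phi>_def by (auto intro!: derivative_eq_intros simp: inner_diff_left)
  qed
  have "\<phi> 1 \<le> \<phi> 0"
  proof (rule DERIV_nonpos_imp_nonincreasing[where f=\<phi>])
    fix s :: real assume s: "0 \<le> s" "s \<le> 1"
    have "(grad (x + s *\<^sub>R h) - grad x) \<bullet> h \<le> norm (grad (x + s *\<^sub>R h) - grad x) * norm h"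
      by (rule norm_cauchy_schwarz)
    also have "\<dots> \<le> L * norm (s *\<^sub>R h) * norm h"
      using lip[of "x + s *\<^sub>R h" x] by (intro mult_right_mono) auto
    also have "\<dots> = L * s * (norm h)\<^sup>2"
      using s by (simp add: power2_eq_square)
    finally show "\<exists>y. (\<phi> has_real_derivative y) (at s) \<and> y \<le> 0"
      using \<phi>_deriv[of s] by (intro exI[of _ "(grad (x + s *\<^sub>R h) - grad x) \<bullet> h - L * s * (norm h)\<^sup>2"]) auto
  qed simp
  then show ?thesis unfolding \<phi>_def by simp
qed

lemma lipschitz_const_nonneg:
  assumes "norm (g x - g y) \<le> L * norm (x - y)" and "x \<noteq> y"
  shows "L \<ge> 0"
proof -
  have "0 \<le> L * norm (x - y)"
    using assms(1) norm_ge_zero order_trans by blast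
  then show ?thesis
    using assms(2) by (simp add: zero_le_mult_iff)
qed

lemma smgd_step_descent:
  fixes f :: "real ^ 'n \<Rightarrow> real" and grad :: "real ^ 'n \<Rightarrow> real ^ 'n"
  assumes grad: "\<And>x. (f has_derivative (\<lambda>h. grad x \<bullet> h)) (at x)"
    and lip: "\<And>x y. norm (grad x - grad y) \<le> L * norm (x - y)"
    and d01: "\<And>i. d $ i \<in> {0, 1}"
    and step: "\<And>i. y $ i = x $ i - \<alpha> * sgn (g $ i) * d $ i"
  shows "f y \<le> f x - \<alpha> * (\<Sum>i\<in>UNIV. grad x $ i * (sgn (g $ i) * d $ i))
                 + L / 2 * \<alpha>\<^sup>2 * (\<Sum>i\<in>UNIV. d $ i)"
proof -
  define h where "h = y - x"
  have h: "h $ i = - \<alpha> * (sgn (g $ i) * d $ i)" for i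
    by (simp add: h_def step)
  have "L \<ge> 0"
    by (rule lipschitz_const_nonneg[OF lip[of "axis undefined 1" 0]]) simp
  have "(norm h)\<^sup>2 = (\<Sum>i\<in>UNIV. (h $ i)\<^sup>2)"
    unfolding power2_norm_eq_inner inner_vec_def by (simp add: power2_eq_square)
  also have "\<dots> \<le> (\<Sum>i\<in>UNIV. \<alpha>\<^sup>2 * d $ i)"
  proof (rule sum_mono)
    fix i
    show "(h $ i)\<^sup>2 \<le> \<alpha>\<^sup>2 * d $ i"
      using d01[of i] by (auto simp: h sgn_real_def power2_eq_square)
  qed
  finally have "(norm h)\<^sup>2 \<le> \<alpha>\<^sup>2 * (\<Sum>i\<in>UNIV. d $ i)"
    by (simp add: sum_distrib_left)
  then have "L / 2 * (norm h)\<^sup>2 \<le> L / 2 * \<alpha>\<^sup>2 * (\<Sum>i\<in>UNIV. d $ i)"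
    using mult_left_mono[of _ _ "L / 2"] \<open>L \<ge> 0\<close> by (simp add: mult.assoc)
  moreover have "grad x \<bullet> h = - \<alpha> * (\<Sum>i\<in>UNIV. grad x $ i * (sgn (g $ i) * d $ i))"
    by (simp add: inner_vec_def h sum_distrib_left algebra_simps)
  moreover have "f y \<le> f x + grad x \<bullet> h + L / 2 * (norm h)\<^sup>2"
    using descent_lemma[OF grad lip, of x h] by (simp add: h_def)
  ultimately show ?thesis
    by simp
qed

lemma smgd_step_dist:
  fixes x y g d :: "real ^ 'n" and \<alpha> :: real
  assumes d01: "\<And>i. d $ i \<in> {0, 1}"
    and step: "\<And>i. y $ i = x $ i - \<alpha> * sgn (g $ i) * d $ i"
  shows "dist y x \<le> CARD('n) * \<bar>\<alpha>\<bar>"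
proof -
  have "dist y x \<le> (\<Sum>i\<in>UNIV. \<bar>(y - x) $ i\<bar>)"
    unfolding dist_norm by (rule norm_le_l1_cart)
  also have "\<dots> \<le> (\<Sum>i\<in>(UNIV :: 'n set). \<bar>\<alpha>\<bar>)"
  proof (rule sum_mono)
    fix i
    show "\<bar>(y - x) $ i\<bar> \<le> \<bar>\<alpha>\<bar>"
      using d01[of i] by (auto simp: step abs_mult sgn_real_def)
  qed
  finally show ?thesis
    by simp
qed

lemma borel_measurable_infnorm [measurable]: "infnorm \<in> borel_measurable borel"
  by (intro borel_measurable_continuous_onI continuous_intros)

lemma borel_measurable_norm1 [measurable]: "norm1 \<in> borel_measurable borel"
  unfolding norm1_def by measurable

lemma borel_measurable_vec_nth_compose [measurable]:
  "f \<in> borel_measurable M \<Longrightarrow> (\<lambda>\<omega>. (f \<omega> :: real ^ 'n) $ i) \<in> borel_measurable M"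
  by (rule measurable_compose[OF _ borel_measurable_nth])

lemma cond_exp_event_eq_integral_uniform_measure:
  fixes h :: "'a \<Rightarrow> 'b::{banach, second_countable_topology}"
  assumes h: "h \<in> borel_measurable M" and pos: "0 < measure M A"
  shows "cond_exp_event M A h = integral\<^sup>L (uniform_measure M A) h"
proof -
  have "emeasure M A = ennreal (measure M A)"
    using pos by (intro emeasure_eq_ennreal_measure) (auto simp: measure_def)
  then have "uniform_measure M A = density M (\<lambda>\<omega>. ennreal (indicator A \<omega> / measure M A))"
    using pos by (simp add: uniform_measure_def divide_ennreal flip: ennreal_indicator)
  moreover have "A \<in> sets M"
    using pos measure_notin_sets by fastforce
  ultimately show ?thesis
    using h by (simp add: integral_density cond_exp_event_def set_lebesgue_integral_def
        flip: integral_scaleR_right)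
qed

lemma prob_space_uniform_measure_pos:
  "0 < measure M A \<Longrightarrow> prob_space (uniform_measure M A)"
  by (intro prob_space_uniform_measure) (auto simp: measure_def)

lemma (in finite_measure) set_integrable_bounded:
  fixes h :: "'a \<Rightarrow> 'b::{banach, second_countable_topology}"
  assumes "h \<in> borel_measurable M" "A \<in> sets M" "\<And>\<omega>. \<omega> \<in> A \<Longrightarrow> norm (h \<omega>) \<le> B"
  shows "set_integrable M A h"
  unfolding set_integrable_def
  using assms by (intro integrable_const_bound[where B="\<bar>B\<bar>"] AE_I2)
    (auto simp: indicator_def intro: order_trans[OF _ abs_ge_self])

lemma set_integral_zero_one_valued:
  assumes d01: "\<And>\<omega>. \<omega> \<in> space M \<Longrightarrow> d \<omega> \<in> {0, 1}"
  shows "(LINT \<omega>:S|M. d \<omega>) = measure M {\<omega> \<in> space M. d \<omega> = 1 \<and> \<omega> \<in> S}"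
proof -
  have "(LINT \<omega>:S|M. d \<omega>) = (\<integral>\<omega>. indicator {\<omega> \<in> space M. d \<omega> = 1 \<and> \<omega> \<in> S} \<omega> \<partial>M)"
    unfolding set_lebesgue_integral_def using d01 by (intro Bochner_Integration.integral_cong) (auto simp: indicator_def)
  then show ?thesis
    by (simp add: Int_absorb2 subset_eq)
qed

lemma set_integral_sgn_mult:
  fixes g h :: "'a \<Rightarrow> real"
  assumes [measurable]: "g \<in> borel_measurable M" "A \<in> sets M" and h: "set_integrable M A h"
  shows "(LINT \<omega>:A|M. sgn (g \<omega>) * h \<omega>)
       = (LINT \<omega>:{\<omega> \<in> A. 0 < g \<omega>}|M. h \<omega>) - (LINT \<omega>:{\<omega> \<in> A. g \<omega> < 0}|M. h \<omega>)"
proof -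
  have "set_integrable M {\<omega> \<in> A. 0 < g \<omega>} h" "set_integrable M {\<omega> \<in> A. g \<omega> < 0} h"
    by (auto intro: set_integrable_subset[OF h])
  then have "(LINT \<omega>:{\<omega> \<in> A. 0 < g \<omega>}|M. h \<omega>) - (LINT \<omega>:{\<omega> \<in> A. g \<omega> < 0}|M. h \<omega>)
      = (\<integral>\<omega>. indicator {\<omega> \<in> A. 0 < g \<omega>} \<omega> * h \<omega> - indicator {\<omega> \<in> A. g \<omega> < 0} \<omega> * h \<omega> \<partial>M)"
    by (simp add: set_lebesgue_integral_def set_integrable_def)
  also have "\<dots> = (LINT \<omega>:A|M. sgn (g \<omega>) * h \<omega>)"
    unfolding set_lebesgue_integral_def by (intro Bochner_Integration.integral_cong) (auto simp: indicator_def sgn_real_def)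
  finally show ?thesis ..
qed

lemma integrable_uniform_measure_bounded:
  fixes h :: "'a \<Rightarrow> 'b::{banach, second_countable_topology}"
  assumes pos: "0 < measure M A" and "h \<in> borel_measurable M"
    and bound: "\<And>\<omega>. \<omega> \<in> A \<Longrightarrow> norm (h \<omega>) \<le> B"
  shows "integrable (uniform_measure M A) h"
proof -
  interpret prob_space "uniform_measure M A"
    using pos by (rule prob_space_uniform_measure_pos)
  have "A \<in> sets M"
    using pos measure_notin_sets by fastforce
  then show ?thesis
    using assms by (intro integrable_const_bound[where B=B] AE_uniform_measureI AE_I2) auto
qed

lemma (in finite_measure) bernoulli_thinning_moments:
  fixes Y :: "'a \<Rightarrow> 'b" and \<phi> :: "'b \<Rightarrow> real" and d :: "'a \<Rightarrow> real"
  assumes [measurable]: "Y \<in> M \<rightarrow>\<^sub>M N" "\<phi> \<in> borel_measurable N" "d \<in> borel_measurable M"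
    and d01: "\<And>\<omega>. \<omega> \<in> space M \<Longrightarrow> d \<omega> \<in> {0, 1}"
    and thinning: "\<And>B. B \<in> sets N \<Longrightarrow> measure M {\<omega> \<in> space M. d \<omega> = 1 \<and> Y \<omega> \<in> B}
        = (LINT \<omega>:{\<omega> \<in> space M. Y \<omega> \<in> B}|M. min (\<bar>\<phi> (Y \<omega>)\<bar> / \<eta>) 1)"
    and B[measurable]: "B \<in> sets N" and small: "\<And>y. y \<in> B \<Longrightarrow> \<bar>\<phi> y\<bar> \<le> \<eta>"
  defines "S \<equiv> {\<omega> \<in> space M. Y \<omega> \<in> B}"
  shows "(LINT \<omega>:S|M. d \<omega>) = (LINT \<omega>:S|M. \<bar>\<phi> (Y \<omega>)\<bar> / \<eta>)"
    and "(LINT \<omega>:S|M. sgn (\<phi> (Y \<omega>)) * d \<omega>) = (LINT \<omega>:S|M. \<phi> (Y \<omega>) / \<eta>)"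
proof -
  have S[measurable]: "S \<in> sets M"
    unfolding S_def by measurable
  have thinned: "(LINT \<omega>:{\<omega> \<in> S. P (Y \<omega>)}|M. d \<omega>) = (LINT \<omega>:{\<omega> \<in> S. P (Y \<omega>)}|M. \<bar>\<phi> (Y \<omega>)\<bar> / \<eta>)"
    if [measurable]: "Measurable.pred N P" for P
  proof -
    define B' where "B' = {y \<in> space N. y \<in> B \<and> P y}"
    have B'[measurable]: "B' \<in> sets N"
      unfolding B'_def by measurable
    have S': "{\<omega> \<in> S. P (Y \<omega>)} = {\<omega> \<in> space M. Y \<omega> \<in> B'}"
      using measurable_space[OF \<open>Y \<in> M \<rightarrow>\<^sub>M N\<close>] by (auto simp: S_def B'_def)
    have "(LINT \<omega>:{\<omega> \<in> space M. Y \<omega> \<in> B'}|M. d \<omega>) = measure M {\<omega> \<in> space M. d \<omega> = 1 \<and> Y \<omega> \<in> B'}"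
      using d01 by (subst set_integral_zero_one_valued) (auto intro!: arg_cong[where f="measure M"])
    also have "\<dots> = (LINT \<omega>:{\<omega> \<in> space M. Y \<omega> \<in> B'}|M. min (\<bar>\<phi> (Y \<omega>)\<bar> / \<eta>) 1)"
      by (rule thinning[OF B'])
    finally have "(LINT \<omega>:{\<omega> \<in> S. P (Y \<omega>)}|M. d \<omega>)
        = (LINT \<omega>:{\<omega> \<in> S. P (Y \<omega>)}|M. min (\<bar>\<phi> (Y \<omega>)\<bar> / \<eta>) 1)"
      unfolding S' .
    also have "\<dots> = (LINT \<omega>:{\<omega> \<in> S. P (Y \<omega>)}|M. \<bar>\<phi> (Y \<omega>)\<bar> / \<eta>)"
      using small by (intro set_lebesgue_integral_cong) (auto simp: S_def min_def divide_le_eq_1)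
    finally show ?thesis .
  qed
  from thinned[of "\<lambda>_. True"] show "(LINT \<omega>:S|M. d \<omega>) = (LINT \<omega>:S|M. \<bar>\<phi> (Y \<omega>)\<bar> / \<eta>)"
    by simp
  have [measurable]: "(\<lambda>\<omega>. \<phi> (Y \<omega>)) \<in> borel_measurable M"
    by measurable
  have int_d: "set_integrable M S d"
    by (intro set_integrable_bounded[where B=1]) (auto simp: S_def dest!: d01)
  have int_\<phi>: "set_integrable M S (\<lambda>\<omega>. \<bar>\<phi> (Y \<omega>)\<bar> / \<eta>)"
    by (intro set_integrable_bounded[where B=1])
      (auto simp: S_def divide_le_eq_1 intro: order_trans[OF small abs_ge_self])
  have "(LINT \<omega>:S|M. sgn (\<phi> (Y \<omega>)) * d \<omega>)
      = (LINT \<omega>:{\<omega> \<in> S. 0 < \<phi> (Y \<omega>)}|M. d \<omega>) - (LINT \<omega>:{\<omega> \<in> S. \<phi> (Y \<omega>) < 0}|M. d \<omega>)"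
    using int_d by (rule set_integral_sgn_mult[rotated 2]; measurable)
  also have "\<dots> = (LINT \<omega>:{\<omega> \<in> S. 0 < \<phi> (Y \<omega>)}|M. \<bar>\<phi> (Y \<omega>)\<bar> / \<eta>)
      - (LINT \<omega>:{\<omega> \<in> S. \<phi> (Y \<omega>) < 0}|M. \<bar>\<phi> (Y \<omega>)\<bar> / \<eta>)"
    by (intro arg_cong2[where f="(-)"] thinned; measurable)
  also have "\<dots> = (LINT \<omega>:S|M. sgn (\<phi> (Y \<omega>)) * (\<bar>\<phi> (Y \<omega>)\<bar> / \<eta>))"
    using int_\<phi> by (rule set_integral_sgn_mult[rotated 2, symmetric]; measurable)
  finally show "(LINT \<omega>:S|M. sgn (\<phi> (Y \<omega>)) * d \<omega>) = (LINT \<omega>:S|M. \<phi> (Y \<omega>) / \<eta>)"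
    by (simp add: sgn_mult_abs times_divide_eq_right)
qed

(* thinning is the integrated form of P[D_i = 1 | X, G] = min (|G_i| / eta) 1. *)
locale smgd_step = prob_space M
  for M :: "'a measure" and \<alpha> \<eta> :: real and X G D X' :: "'a \<Rightarrow> real ^ 'n" +
  assumes borel_measurable_iterates [measurable]:
      "X \<in> borel_measurable M" "X' \<in> borel_measurable M" "G \<in> borel_measurable M" "D \<in> borel_measurable M"
    and next_iterate: "\<And>\<omega> i. \<omega> \<in> space M \<Longrightarrow> X' \<omega> $ i = X \<omega> $ i - \<alpha> * sgn (G \<omega> $ i) * D \<omega> $ i"
    and D01: "\<And>\<omega> i. \<omega> \<in> space M \<Longrightarrow> D \<omega> $ i \<in> {0, 1}"
    and thinning: "\<And>i B. B \<in> sets (borel :: ((real ^ 'n) \<times> (real ^ 'n)) measure) \<Longrightarrow>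
      measure M {\<omega> \<in> space M. D \<omega> $ i = 1 \<and> (X \<omega>, G \<omega>) \<in> B}
      = (LINT \<omega>:{\<omega> \<in> space M. (X \<omega>, G \<omega>) \<in> B}|M. min (\<bar>G \<omega> $ i\<bar> / \<eta>) 1)"
begin

definition bounded_event :: "real ^ 'n \<Rightarrow> 'a set" where
  "bounded_event x = {\<omega> \<in> space M. X \<omega> = x \<and> infnorm (G \<omega>) \<le> \<eta>}"

abbreviation cond_measure :: "real ^ 'n \<Rightarrow> 'a measure" where
  "cond_measure x \<equiv> uniform_measure M (bounded_event x)"

lemma bounded_event_sets [measurable]: "bounded_event x \<in> sets M"
  unfolding bounded_event_def by measurable

lemma bounded_eventD:
  assumes "\<omega> \<in> bounded_event x"
  shows "\<omega> \<in> space M" "X \<omega> = x" "\<bar>G \<omega> $ i\<bar> \<le> \<eta>" "norm (G \<omega>) \<le> sqrt CARD('n) * \<eta>"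
    and "dist x (X' \<omega>) \<le> CARD('n) * \<bar>\<alpha>\<bar>"
proof -
  have \<omega>: "\<omega> \<in> space M" "X \<omega> = x" "infnorm (G \<omega>) \<le> \<eta>"
    using assms by (auto simp: bounded_event_def)
  then show "\<omega> \<in> space M" "X \<omega> = x" "\<bar>G \<omega> $ i\<bar> \<le> \<eta>"
    using component_le_infnorm_cart[of "G \<omega>" i] by simp_all
  have "norm (G \<omega>) \<le> sqrt DIM(real ^ 'n) * infnorm (G \<omega>)"
    by (rule norm_le_infnorm)
  also have "\<dots> \<le> sqrt CARD('n) * \<eta>"
    using \<omega>(3) by (simp add: mult_left_mono)
  finally show "norm (G \<omega>) \<le> sqrt CARD('n) * \<eta>" .
  have "dist (X' \<omega>) (X \<omega>) \<le> CARD('n) * \<bar>\<alpha>\<bar>"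
    using \<omega>(1) by (intro smgd_step_dist[where g="G \<omega>" and d="D \<omega>"] D01 next_iterate)
  then show "dist x (X' \<omega>) \<le> CARD('n) * \<bar>\<alpha>\<bar>"
    using \<omega>(2) by (simp add: dist_commute)
qed

lemma integrable_cond_measure:
  fixes f :: "real ^ 'n \<Rightarrow> real"
  assumes pos: "0 < measure M (bounded_event x)" and f: "continuous_on UNIV f"
  shows "integrable (cond_measure x) (\<lambda>\<omega>. f (X' \<omega>))"
    and "integrable (cond_measure x) (\<lambda>\<omega>. D \<omega> $ i)"
    and "integrable (cond_measure x) (\<lambda>\<omega>. sgn (G \<omega> $ i) * D \<omega> $ i)"
    and "integrable (cond_measure x) (\<lambda>\<omega>. \<bar>G \<omega> $ i\<bar>)"
    and "integrable (cond_measure x) G"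
proof -
  have [measurable]: "f \<in> borel_measurable borel"
    using f by (rule borel_measurable_continuous_onI)
  have "bounded (f ` cball x (CARD('n) * \<bar>\<alpha>\<bar>))"
    using continuous_on_subset[OF f subset_UNIV]
    by (intro compact_imp_bounded compact_continuous_image compact_cball)
  then obtain C where C: "\<And>y. y \<in> cball x (CARD('n) * \<bar>\<alpha>\<bar>) \<Longrightarrow> \<bar>f y\<bar> \<le> C"
    unfolding bounded_iff real_norm_def by blast
  have D_le_1: "\<bar>D \<omega> $ i\<bar> \<le> 1" if "\<omega> \<in> bounded_event x" for \<omega>
    using D01[OF bounded_eventD(1)[OF that], of i] by auto
  show "integrable (cond_measure x) (\<lambda>\<omega>. f (X' \<omega>))"
    by (rule integrable_uniform_measure_bounded[OF pos, where B=C])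
      (auto intro!: C simp: bounded_eventD)
  show "integrable (cond_measure x) (\<lambda>\<omega>. D \<omega> $ i)"
    by (rule integrable_uniform_measure_bounded[OF pos, where B=1]) (auto intro: D_le_1)
  show "integrable (cond_measure x) (\<lambda>\<omega>. sgn (G \<omega> $ i) * D \<omega> $ i)"
    by (rule integrable_uniform_measure_bounded[OF pos, where B=1])
      (auto simp: abs_mult sgn_real_def intro: D_le_1)
  show "integrable (cond_measure x) (\<lambda>\<omega>. \<bar>G \<omega> $ i\<bar>)"
    by (rule integrable_uniform_measure_bounded[OF pos, where B=\<eta>]) (auto intro: bounded_eventD)
  show "integrable (cond_measure x) G"
    by (rule integrable_uniform_measure_bounded[OF pos, where B="sqrt CARD('n) * \<eta>"])
      (auto intro: bounded_eventD)
qed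

lemma conditional_thinning_moments:
  assumes pos: "0 < measure M (bounded_event x)"
  shows "integral\<^sup>L (cond_measure x) (\<lambda>\<omega>. D \<omega> $ i) = integral\<^sup>L (cond_measure x) (\<lambda>\<omega>. \<bar>G \<omega> $ i\<bar>) / \<eta>"
    and "integral\<^sup>L (cond_measure x) (\<lambda>\<omega>. sgn (G \<omega> $ i) * D \<omega> $ i)
      = integral\<^sup>L (cond_measure x) (\<lambda>\<omega>. G \<omega> $ i) / \<eta>"
proof -
  define B where "B = {p :: (real ^ 'n) \<times> (real ^ 'n) \<in> space borel. fst p = x \<and> infnorm (snd p) \<le> \<eta>}"
  have [measurable]: "B \<in> sets borel"
    unfolding B_def borel_prod[symmetric] by measurable
  have Y: "(\<lambda>\<omega>. (X \<omega>, G \<omega>)) \<in> M \<rightarrow>\<^sub>M borel"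
    unfolding borel_prod[symmetric] by measurable
  have \<phi>: "(\<lambda>p :: (real ^ 'n) \<times> (real ^ 'n). snd p $ i) \<in> borel_measurable borel"
    by (intro borel_measurable_continuous_onI continuous_intros)
  have d: "(\<lambda>\<omega>. D \<omega> $ i) \<in> borel_measurable M"
    by measurable
  have event: "bounded_event x = {\<omega> \<in> space M. (X \<omega>, G \<omega>) \<in> B}"
    by (auto simp: bounded_event_def B_def)
  have small: "\<bar>snd p $ i\<bar> \<le> \<eta>" if "p \<in> B" for p
    using component_le_infnorm_cart[of "snd p" i] that unfolding B_def by auto
  have thinning': "\<And>B. B \<in> sets borel \<Longrightarrow> measure M {\<omega> \<in> space M. D \<omega> $ i = 1 \<and> (X \<omega>, G \<omega>) \<in> B}
      = (LINT \<omega>:{\<omega> \<in> space M. (X \<omega>, G \<omega>) \<in> B}|M. min (\<bar>snd (X \<omega>, G \<omega>) $ i\<bar> / \<eta>) 1)"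
    using thinning by simp
  note moments = bernoulli_thinning_moments[OF Y \<phi> d D01 thinning' \<open>B \<in> sets borel\<close> small, folded event]
  have cond_exp: "integral\<^sup>L (cond_measure x) h
      = (1 / measure M (bounded_event x)) * (LINT \<omega>:bounded_event x|M. h \<omega>)"
    if "h \<in> borel_measurable M" for h :: "'a \<Rightarrow> real"
    using cond_exp_event_eq_integral_uniform_measure[OF that pos] by (simp add: cond_exp_event_def)
  show "integral\<^sup>L (cond_measure x) (\<lambda>\<omega>. D \<omega> $ i) = integral\<^sup>L (cond_measure x) (\<lambda>\<omega>. \<bar>G \<omega> $ i\<bar>) / \<eta>"
    using moments(1) by (simp add: cond_exp)
  show "integral\<^sup>L (cond_measure x) (\<lambda>\<omega>. sgn (G \<omega> $ i) * D \<omega> $ i)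
      = integral\<^sup>L (cond_measure x) (\<lambda>\<omega>. G \<omega> $ i) / \<eta>"
    using moments(2) by (simp add: cond_exp)
qed

lemma conditional_expected_descent:
  fixes f :: "real ^ 'n \<Rightarrow> real" and grad :: "real ^ 'n \<Rightarrow> real ^ 'n"
  assumes grad: "\<And>x. (f has_derivative (\<lambda>h. grad x \<bullet> h)) (at x)"
    and lip: "\<And>x y. norm (grad x - grad y) \<le> L * norm (x - y)"
    and pos: "0 < measure M (bounded_event x)"
    and unbiased: "cond_exp_event M (bounded_event x) G = grad x"
  shows "cond_exp_event M (bounded_event x) (\<lambda>\<omega>. f (X' \<omega>))
    \<le> f x + L * \<alpha>\<^sup>2 / (2 * \<eta>) * cond_exp_event M (bounded_event x) (\<lambda>\<omega>. norm1 (G \<omega>))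
        - \<alpha> / \<eta> * (norm (grad x))\<^sup>2"
proof -
  define E where "E = (integral\<^sup>L (cond_measure x) :: ('a \<Rightarrow> real) \<Rightarrow> real)"
  interpret conditional: prob_space "cond_measure x"
    using pos by (rule prob_space_uniform_measure_pos)
  have "continuous_on UNIV f"
    using grad by (intro continuous_at_imp_continuous_on ballI has_derivative_continuous) blast
  note [simp] = integrable_cond_measure[OF pos this]
  have [measurable]: "f \<in> borel_measurable borel"
    using \<open>continuous_on UNIV f\<close> by (rule borel_measurable_continuous_onI)
  have cond_exp: "cond_exp_event M (bounded_event x) h = integral\<^sup>L (cond_measure x) h"
    if "h \<in> borel_measurable M" for h :: "'a \<Rightarrow> 'b::{banach, second_countable_topology}"
    using that pos by (rule cond_exp_event_eq_integral_uniform_measure)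
  have unbiased_i: "E (\<lambda>\<omega>. G \<omega> $ i) = grad x $ i" for i
    using integral_bounded_linear[OF bounded_linear_vec_nth, of "cond_measure x" G i]
    by (simp add: E_def flip: unbiased cond_exp)
  have "f (X' \<omega>) \<le> f x - \<alpha> * (\<Sum>i\<in>UNIV. grad x $ i * (sgn (G \<omega> $ i) * D \<omega> $ i))
      + L / 2 * \<alpha>\<^sup>2 * (\<Sum>i\<in>UNIV. D \<omega> $ i)" if "\<omega> \<in> bounded_event x" for \<omega>
    using smgd_step_descent[OF grad lip D01 next_iterate, OF bounded_eventD(1,1)[OF that]]
    by (simp add: bounded_eventD(2)[OF that])
  then have "AE \<omega> in cond_measure x. f (X' \<omega>) \<le> f x
      - \<alpha> * (\<Sum>i\<in>UNIV. grad x $ i * (sgn (G \<omega> $ i) * D \<omega> $ i)) + L / 2 * \<alpha>\<^sup>2 * (\<Sum>i\<in>UNIV. D \<omega> $ i)"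
    by (intro AE_uniform_measureI AE_I2) auto
  then have "E (\<lambda>\<omega>. f (X' \<omega>)) \<le> E (\<lambda>\<omega>. f x
      - \<alpha> * (\<Sum>i\<in>UNIV. grad x $ i * (sgn (G \<omega> $ i) * D \<omega> $ i)) + L / 2 * \<alpha>\<^sup>2 * (\<Sum>i\<in>UNIV. D \<omega> $ i))"
    unfolding E_def by (intro integral_mono_AE) auto
  also have "\<dots> = f x - \<alpha> * (\<Sum>i\<in>UNIV. grad x $ i * E (\<lambda>\<omega>. sgn (G \<omega> $ i) * D \<omega> $ i))
      + L / 2 * \<alpha>\<^sup>2 * (\<Sum>i\<in>UNIV. E (\<lambda>\<omega>. D \<omega> $ i))"
    using conditional.prob_space by (simp add: E_def)
  also have "\<dots> = f x - \<alpha> / \<eta> * (\<Sum>i\<in>UNIV. grad x $ i * grad x $ i)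
      + L * \<alpha>\<^sup>2 / (2 * \<eta>) * E (\<lambda>\<omega>. norm1 (G \<omega>))"
    using conditional_thinning_moments[OF pos, folded E_def] unbiased_i
    by (simp add: norm1_def E_def sum_distrib_left sum_divide_distrib)
  finally show ?thesis
    by (simp add: cond_exp E_def power2_norm_eq_inner inner_vec_def)
qed

end

theorem theorem4p1:
  fixes M :: "'a measure"
    and f :: "real ^ 'n \<Rightarrow> real"
    and grad :: "real ^ 'n \<Rightarrow> real ^ 'n"
    and L \<alpha> \<eta> :: real
    and X :: "nat \<Rightarrow> 'a \<Rightarrow> real ^ 'n"
    and Gt :: "nat \<Rightarrow> 'a \<Rightarrow> real ^ 'n"
    and D :: "nat \<Rightarrow> 'a \<Rightarrow> real ^ 'n"
  assumes prob: "prob_space M"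
    and grad: "\<And>x. (f has_derivative (\<lambda>h. grad x \<bullet> h)) (at x)"
    and lip: "\<And>x y. norm (grad x - grad y) \<le> L * norm (x - y)"
    and alpha: "\<alpha> > 0" and eta: "\<eta> > 0"
    and X_meas: "\<And>t. X t \<in> borel_measurable M"
    and G_meas: "\<And>t. Gt t \<in> borel_measurable M"
    and D_meas: "\<And>t. D t \<in> borel_measurable M"
    and X0: "\<And>\<omega> i. \<omega> \<in> space M \<Longrightarrow> X 0 \<omega> $ i \<in> {\<alpha> * of_int k | k. True}"
    and step: "\<And>t \<omega> i. \<omega> \<in> space M \<Longrightarrow>
               X (Suc t) \<omega> $ i = X t \<omega> $ i - \<alpha> * sgn (Gt t \<omega> $ i) * D t \<omega> $ i"
    and D01: "\<And>t \<omega> i. \<omega> \<in> space M \<Longrightarrow> D t \<omega> $ i \<in> {0, 1}"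
    and bern: "\<And>t i B. B \<in> sets (borel :: ((real ^ 'n) \<times> (real ^ 'n)) measure) \<Longrightarrow>
               measure M {\<omega> \<in> space M. D t \<omega> $ i = 1 \<and> (X t \<omega>, Gt t \<omega>) \<in> B}
               = (\<integral>\<omega>\<in>{\<omega> \<in> space M. (X t \<omega>, Gt t \<omega>) \<in> B}. min (\<bar>Gt t \<omega> $ i\<bar> / \<eta>) 1 \<partial>M)"
    and unbiased: "\<And>t x. measure M {\<omega> \<in> space M. X t \<omega> = x} > 0 \<Longrightarrow>
               set_integrable M {\<omega> \<in> space M. X t \<omega> = x} (Gt t) \<and>
               cond_exp_event M {\<omega> \<in> space M. X t \<omega> = x} (Gt t) = grad x"
    and unbiased_E: "\<And>t x. measure M {\<omega> \<in> space M. X t \<omega> = x \<and> infnorm (Gt t \<omega>) \<le> \<eta>} > 0 \<Longrightarrow>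
               set_integrable M {\<omega> \<in> space M. X t \<omega> = x \<and> infnorm (Gt t \<omega>) \<le> \<eta>} (Gt t) \<and>
               cond_exp_event M {\<omega> \<in> space M. X t \<omega> = x \<and> infnorm (Gt t \<omega>) \<le> \<eta>} (Gt t) = grad x"
    and pos: "measure M {\<omega> \<in> space M. X t \<omega> = x \<and> infnorm (Gt t \<omega>) \<le> \<eta>} > 0"
  shows "cond_exp_event M {\<omega> \<in> space M. X t \<omega> = x \<and> infnorm (Gt t \<omega>) \<le> \<eta>} (\<lambda>\<omega>. f (X (Suc t) \<omega>))
         \<le> f x + L * \<alpha>\<^sup>2 / (2 * \<eta>) *
              cond_exp_event M {\<omega> \<in> space M. X t \<omega> = x \<and> infnorm (Gt t \<omega>) \<le> \<eta>} (\<lambda>\<omega>. norm1 (Gt t \<omega>))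
           - \<alpha> / \<eta> * (norm (grad x))\<^sup>2"
proof -
  interpret smgd_step M \<alpha> \<eta> "X t" "Gt t" "D t" "X (Suc t)"
    using prob X_meas[of t] X_meas[of "Suc t"] G_meas D_meas step D01 bern
    by (simp add: smgd_step_def smgd_step_axioms_def)
  show ?thesis
    using conditional_expected_descent[OF grad lip] pos unbiased_E[OF pos]
    by (simp add: bounded_event_def)
qed

end
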